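(* Let $S$ be a $\tau$-mutation system over $\mathcal{A}=\{a_0,\dots,a_{d-1}\}$ with starting word $w$ of length $m$, and let $n\in\mathbb{N}$. Let $\mathbf{M}$ be the $d\times d$ substitution matrix $\mathbf{M}_{i,j}=\mathbb{E}[\mathrm{ct}_{\vartheta(a_j)}(a_i)]$. Then the expected vector of symbol frequencies in $S(n)$ satisfies \[\mathbb{E}\big[\mathbf{fr}^{(1)}_{S(n)}\big]=\frac{\mathbb{E}\big[\mathbf{ct}^{(1)}_{S(n)}\big]}{m+n(\tau-1)}=\frac{1}{m+n(\tau-1)}\prod_{j=0}^{n-1}\frac{1}{m+j(\tau-1)}\Big(\mathbf{M}+(m+j(\tau-1)-1)\mathbf{I}\Big)\cdot\mathbf{ct}^{(1)}_w .\]
   Context: Let $\mathcal{A}=\{a_0,\dots,a_{d-1}\}$ be a finite alphabet and $\mathcal{A}^\star$ the set of finite nonempty words over $\mathcal{A}$. A mutation law $(\vartheta,\mathbb{P})$ assigns to each $a_t$ a finitely supported probability distribution $\mathbb{P}_{a_t}$ on $\mathcal{A}^\star$; $\vartheta(a_t)$ denotes a random word with law $\mathbb{P}_{a_t}$. It is a $\tau$-mutation law ($\tau\in\mathbb{N}$) if each $\mathbb{P}_{a_t}$ is supported on $\mathcal{A}^\tau$, and an average $\tau$-mutation law if $\mathbb{E}|\vartheta(a_t)|=\tau$ for all $t$. A mutation step applied to $w=w_0\cdots w_{m-1}$ chooses $i\in\{0,\dots,m-1\}$ uniformly at random and replaces $w_i$ by an independent random word with law $\mathbb{P}_{w_i}$,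 giving $\vartheta(w)=w_0\cdots w_{i-1}\vartheta(w_i)w_{i+1}\cdots w_{m-1}$. A mutation system with starting word $w$ is $S(0)=w$, $S(n)=\vartheta(S(n-1))$ with fresh independent randomness at each step; it is a ($\text{average}$) $\tau$-mutation system if its law is. For words $u,v$ with $|u|\le|v|$, $\mathrm{ct}_v(u)$ is the number of $i\in\{0,\dots,|v|-1\}$ with $v_iv_{i+1}\cdots v_{i+|u|-1}=u$, indices taken cyclically modulo $|v|$. For $k\in\mathbb{N}$, $\mathbf{ct}^{(k)}_v\in\mathbb{R}^{d^k}$ is the vector $(\mathrm{ct}_v(u))_{u\in\mathcal{A}^k}$ (coordinates in lexicographic order) and $\mathbf{fr}^{(k)}_v=\mathbf{ct}^{(k)}_v/|v|$. The matrices in the product commute, so the order of the product is immaterial. *)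

theory Defs
  imports "HOL-Probability.Probability" "Jordan_Normal_Form.Matrix"
begin

text \<open>Alphabet: letters are the naturals 0..d-1 (a_t is represented by t).
  Words are nat lists; nonempty words over the alphabet.\<close>

definition words :: "nat \<Rightarrow> nat list set" where
  "words d = {u. u \<noteq> [] \<and> set u \<subseteq> {..<d}}"

definition mutation_law :: "nat \<Rightarrow> (nat \<Rightarrow> nat list pmf) \<Rightarrow> bool" where
  "mutation_law d P \<longleftrightarrow> (\<forall>t<d. finite (set_pmf (P t)) \<and> set_pmf (P t) \<subseteq> words d)"

definition tau_mutation_law :: "nat \<Rightarrow> nat \<Rightarrow> (nat \<Rightarrow> nat list pmf) \<Rightarrow> bool" where
  "tau_mutation_law d \<tau> P \<longleftrightarrow> mutation_law d P \<and>
     (\<forall>t<d. \<forall>u\<in>set_pmf (P t). length u = \<tau>)"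

definition mutate :: "(nat \<Rightarrow> nat list pmf) \<Rightarrow> nat list \<Rightarrow> nat list pmf" where
  "mutate P w = bind_pmf (pmf_of_set {..<length w})
     (\<lambda>i. map_pmf (\<lambda>u. take i w @ u @ drop (Suc i) w) (P (w ! i)))"

primrec mutation_system :: "(nat \<Rightarrow> nat list pmf) \<Rightarrow> nat list \<Rightarrow> nat \<Rightarrow> nat list pmf" where
  "mutation_system P w 0 = return_pmf w"
| "mutation_system P w (Suc n) = bind_pmf (mutation_system P w n) (mutate P)"

definition ct :: "nat list \<Rightarrow> nat list \<Rightarrow> nat" where
  "ct v u = card {i. i < length v \<and> (\<forall>j<length u. v ! ((i + j) mod length v) = u ! j)}"

definition ct1 :: "nat \<Rightarrow> nat list \<Rightarrow> real vec" where
  "ct1 d v = vec d (\<lambda>i. real (ct v [i]))"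

definition fr1 :: "nat \<Rightarrow> nat list \<Rightarrow> real vec" where
  "fr1 d v = vec d (\<lambda>i. real (ct v [i]) / real (length v))"

definition expected_vec :: "nat \<Rightarrow> 'a pmf \<Rightarrow> ('a \<Rightarrow> real vec) \<Rightarrow> real vec" where
  "expected_vec d p f = vec d (\<lambda>i. measure_pmf.expectation p (\<lambda>x. f x $ i))"

definition subst_matrix :: "nat \<Rightarrow> (nat \<Rightarrow> nat list pmf) \<Rightarrow> real mat" where
  "subst_matrix d P = mat d d (\<lambda>(i,j). measure_pmf.expectation (P j) (\<lambda>u. real (ct u [i])))"

end

theory Submission
  imports Defs
begin

text \<open>Mutating the uniformly chosen position i of a word v removes one letter v ! i and inserts
  a word whose expected letter counts form column v ! i of the substitution matrix M. Averaging
  over i gives E[ct(\<vartheta>(v))] = (M + (|v| - 1) I) ct(v) / |v|, which is linear in ct(v).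
  For a \<tau>-mutation law the length |S(j)| = m + j(\<tau> - 1) is deterministic, so the expected
  count vectors satisfy a linear recursion whose solution is the stated product; dividing by the
  deterministic length yields the frequencies. All factors are polynomials in M, hence commute.\<close>

lemma ct_singleton: "ct v [a] = count_list v a"
proof -
  have "{i. i < length v \<and> (\<forall>j<length [a]. v ! ((i + j) mod length v) = [a] ! j)}
        = {i. i < length v \<and> a = v ! i}" by auto
  then show ?thesis
    unfolding ct_def count_list_eq_length_filter length_filter_conv_card by simp
qed

lemma count_list_replace_nth:
  assumes "i < length v"
  shows "real (count_list (take i v @ u @ drop (Suc i) v) a)
       = real (count_list v a) - of_bool (v ! i = a) + real (count_list u a)"
proof -
  have "count_list v a = count_list (take i v @ v ! i # drop (Suc i) v) a"
    using id_take_nth_drop[OF assms] by simp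
  then show ?thesis by simp
qed

lemma sum_nth_eq_sum_count_list:
  fixes f :: "'a \<Rightarrow> 'b::comm_semiring_1"
  assumes "set v \<subseteq> A" "finite A"
  shows "(\<Sum>i<length v. f (v ! i)) = (\<Sum>j\<in>A. f j * of_nat (count_list v j))"
  using assms(1)
proof (induction v)
  case (Cons x v)
  have "(\<Sum>i<length (x # v). f ((x # v) ! i)) = f x + (\<Sum>i<length v. f (v ! i))"
    unfolding length_Cons sum.lessThan_Suc_shift by simp
  also have "\<dots> = (\<Sum>j\<in>A. (if j = x then f j else 0)) + (\<Sum>j\<in>A. f j * of_nat (count_list v j))"
    using Cons assms(2) by simp
  also have "\<dots> = (\<Sum>j\<in>A. f j * of_nat (count_list (x # v) j))"
    unfolding sum.distrib[symmetric] by (intro sum.cong) (auto simp: algebra_simps)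
  finally show ?case .
qed simp

lemma set_pmf_mutate:
  assumes "v \<noteq> []"
  shows "set_pmf (mutate P v)
       = (\<Union>i<length v. (\<lambda>u. take i v @ u @ drop (Suc i) v) ` set_pmf (P (v ! i)))"
  using assms by (simp add: mutate_def lessThan_empty_iff)

lemma nth_word_less:
  assumes "v \<in> words d" "i < length v"
  shows "v ! i < d"
  using assms nth_mem by (fastforce simp: words_def)

lemma finite_set_pmf_mutate:
  assumes "mutation_law d P" "v \<in> words d"
  shows "finite (set_pmf (mutate P v))"
  using assms nth_word_less[OF assms(2)]
  by (auto simp: set_pmf_mutate words_def mutation_law_def)

lemma set_pmf_mutate_subset_words:
  assumes "mutation_law d P" "v \<in> words d"
  shows "set_pmf (mutate P v) \<subseteq> words d"
proof
  fix x assume "x \<in> set_pmf (mutate P v)"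
  then obtain i u where i: "i < length v" and u: "u \<in> set_pmf (P (v ! i))"
    and x: "x = take i v @ u @ drop (Suc i) v"
    using assms(2) by (auto simp: set_pmf_mutate words_def)
  have "u \<in> words d"
    using assms(1) nth_word_less[OF assms(2) i] u by (auto simp: mutation_law_def)
  then show "x \<in> words d"
    using assms(2) set_take_subset[of i v] set_drop_subset[of "Suc i" v]
    by (auto simp: x words_def)
qed

lemma length_mutate:
  assumes "tau_mutation_law d \<tau> P" "v \<in> words d" "x \<in> set_pmf (mutate P v)"
  shows "real (length x) = real (length v) + real \<tau> - 1"
proof -
  obtain i u where i: "i < length v" and u: "u \<in> set_pmf (P (v ! i))"
    and x: "x = take i v @ u @ drop (Suc i) v"
    using assms(2,3) by (auto simp: set_pmf_mutate words_def)
  have "length u = \<tau>"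
    using assms(1) nth_word_less[OF assms(2) i] u by (auto simp: tau_mutation_law_def)
  with i show ?thesis by (simp add: x of_nat_diff)
qed

lemma mutation_system_support:
  assumes "tau_mutation_law d \<tau> P" "w \<in> words d"
  shows "finite (set_pmf (mutation_system P w n)) \<and> set_pmf (mutation_system P w n) \<subseteq> words d
    \<and> (\<forall>v\<in>set_pmf (mutation_system P w n).
         real (length v) = real (length w) + real n * (real \<tau> - 1))"
proof (induction n)
  case (Suc n)
  have law: "mutation_law d P" using assms(1) by (simp add: tau_mutation_law_def)
  show ?case
    using Suc finite_set_pmf_mutate[OF law] set_pmf_mutate_subset_words[OF law]
      length_mutate[OF assms(1)]
    by (fastforce simp: algebra_simps)
qed (use assms(2) in simp)

lemma expectation_count_list_mutate:
  assumes law: "mutation_law d P" and v: "v \<in> words d"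
  shows "measure_pmf.expectation (mutate P v) (\<lambda>x. real (count_list x a))
     = (1 / real (length v)) *
       ((\<Sum>j<d. measure_pmf.expectation (P j) (\<lambda>u. real (count_list u a)) * real (count_list v j))
        + (real (length v) - 1) * real (count_list v a))"
proof -
  let ?l = "length v"
  define E where "E j = measure_pmf.expectation (P j) (\<lambda>u. real (count_list u a))" for j
  have fin: "finite (set_pmf (P (v ! i)))" if "i < ?l" for i
    using law nth_word_less[OF v that] by (simp add: mutation_law_def)
  have "measure_pmf.expectation (mutate P v) (\<lambda>x. real (count_list x a))
      = (\<Sum>i<?l. measure_pmf.expectation (P (v ! i))
           (\<lambda>u. real (count_list (take i v @ u @ drop (Suc i) v) a))) / real ?l"
    unfolding mutate_def using v fin
    by (subst pmf_expectation_bind_pmf_of_set)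
      (auto simp: words_def lessThan_empty_iff divide_inverse mult.commute sum_distrib_left)
  also have "\<dots> = (\<Sum>i<?l. real (count_list v a) - of_bool (v ! i = a) + E (v ! i)) / real ?l"
  proof (intro arg_cong[where f = "\<lambda>x. x / _"] sum.cong refl)
    fix i assume "i \<in> {..<?l}"
    then have i: "i < ?l" by simp
    have "measure_pmf.expectation (P (v ! i))
           (\<lambda>u. real (count_list (take i v @ u @ drop (Suc i) v) a))
        = measure_pmf.expectation (P (v ! i))
           (\<lambda>u. real (count_list v a) - of_bool (v ! i = a) + real (count_list u a))"
      using count_list_replace_nth[OF i] by (intro Bochner_Integration.integral_cong) simp_all
    also have "\<dots> = real (count_list v a) - of_bool (v ! i = a) + E (v ! i)"
      using fin[OF i] unfolding E_def
      by (subst Bochner_Integration.integral_add) (auto intro: integrable_measure_pmf_finite)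
    finally show "measure_pmf.expectation (P (v ! i))
           (\<lambda>u. real (count_list (take i v @ u @ drop (Suc i) v) a))
         = real (count_list v a) - of_bool (v ! i = a) + E (v ! i)" .
  qed
  also have "(\<Sum>i<?l. real (count_list v a) - of_bool (v ! i = a) + E (v ! i))
      = real ?l * real (count_list v a) - real (count_list v a) + (\<Sum>j<d. E j * real (count_list v j))"
    using v sum_nth_eq_sum_count_list[of v "{..<d}" E]
    by (simp add: sum.distrib sum_subtractf words_def count_list_eq_length_filter
        length_filter_conv_card Int_def conj_commute eq_commute)
  finally show ?thesis
    using v by (simp add: E_def words_def field_simps)
qed

lemma mult_add_smult_one_commute:
  fixes X :: "'a::comm_ring_1 mat"
  assumes X: "X \<in> carrier_mat n n"
  shows "X * (X + k \<cdot>\<^sub>m 1\<^sub>m n) = (X + k \<cdot>\<^sub>m 1\<^sub>m n) * X"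
proof -
  have "X * (X + k \<cdot>\<^sub>m 1\<^sub>m n) = X * X + k \<cdot>\<^sub>m X"
    using X mult_smult_distrib[OF X one_carrier_mat] right_mult_one_mat[OF X]
    by (simp add: mult_add_distrib_mat[of _ n n])
  also have "\<dots> = (X + k \<cdot>\<^sub>m 1\<^sub>m n) * X"
    using X mult_smult_assoc_mat[OF one_carrier_mat X] left_mult_one_mat[OF X]
    by (simp add: add_mult_distrib_mat[of _ n n])
  finally show ?thesis .
qed

lemma smult_mat_mult_commute:
  fixes A B :: "'a::comm_ring_1 mat"
  assumes A: "A \<in> carrier_mat n n" and B: "B \<in> carrier_mat n n" and AB: "A * B = B * A"
  shows "(c \<cdot>\<^sub>m A) * (c' \<cdot>\<^sub>m B) = (c' \<cdot>\<^sub>m B) * (c \<cdot>\<^sub>m A)"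
proof -
  have AB_smult: "(a \<cdot>\<^sub>m A) * (b \<cdot>\<^sub>m B) = b \<cdot>\<^sub>m (a \<cdot>\<^sub>m (A * B))"
    and BA_smult: "(b \<cdot>\<^sub>m B) * (a \<cdot>\<^sub>m A) = a \<cdot>\<^sub>m (b \<cdot>\<^sub>m (B * A))" for a b
    using A B by (simp_all add: mult_smult_assoc_mat[of _ n n] mult_smult_distrib[of _ n n])
  show ?thesis
    unfolding AB_smult BA_smult AB by (intro eq_matI) (auto simp: mult.left_commute)
qed

lemma affine_mat_commute:
  fixes M :: "'a::comm_ring_1 mat"
  assumes M: "M \<in> carrier_mat n n"
  shows "(c \<cdot>\<^sub>m (M + b \<cdot>\<^sub>m 1\<^sub>m n)) * (c' \<cdot>\<^sub>m (M + b' \<cdot>\<^sub>m 1\<^sub>m n))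
       = (c' \<cdot>\<^sub>m (M + b' \<cdot>\<^sub>m 1\<^sub>m n)) * (c \<cdot>\<^sub>m (M + b \<cdot>\<^sub>m 1\<^sub>m n))"
proof -
  define X where "X = M + b \<cdot>\<^sub>m 1\<^sub>m n"
  have X: "X \<in> carrier_mat n n" using M by (simp add: X_def)
  have "M + b' \<cdot>\<^sub>m 1\<^sub>m n = X + (b' - b) \<cdot>\<^sub>m 1\<^sub>m n"
    using M unfolding X_def by (intro eq_matI) (auto simp: algebra_simps)
  then show ?thesis
    using smult_mat_mult_commute[OF X _ mult_add_smult_one_commute[OF X]] X
    by (simp add: X_def[symmetric])
qed

lemma foldr_mult_mat_carrier:
  assumes "\<And>j. A j \<in> carrier_mat n n"
  shows "foldr (\<lambda>j B. A j * B) xs (1\<^sub>m n) \<in> carrier_mat n n"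
  using assms by (induction xs) (auto intro: mult_carrier_mat)

lemma foldr_mult_mat_commute:
  fixes A :: "nat \<Rightarrow> 'a::semiring_1 mat"
  assumes car: "\<And>j. A j \<in> carrier_mat n n"
    and comm: "\<And>j. A j * A k = A k * A j"
  shows "foldr (\<lambda>j B. A j * B) xs (A k) = A k * foldr (\<lambda>j B. A j * B) xs (1\<^sub>m n)"
proof (induction xs)
  case (Cons x xs)
  let ?F = "foldr (\<lambda>j B. A j * B) xs (1\<^sub>m n)"
  have F: "?F \<in> carrier_mat n n" by (rule foldr_mult_mat_carrier[OF car])
  have "foldr (\<lambda>j B. A j * B) (x # xs) (A k) = A x * (A k * ?F)" using Cons by simp
  also have "\<dots> = (A x * A k) * ?F" using assoc_mult_mat[OF car[of x] car[of k] F] by simp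
  also have "\<dots> = A k * (A x * ?F)" using assoc_mult_mat[OF car[of k] car[of x] F] comm by simp
  finally show ?case by simp
qed (use right_mult_one_mat[OF car[of k]] in simp)

lemma foldr_upt_Suc_mult_mat:
  fixes A :: "nat \<Rightarrow> 'a::semiring_1 mat"
  assumes car: "\<And>j. A j \<in> carrier_mat n n"
    and comm: "\<And>j k. A j * A k = A k * A j"
  shows "foldr (\<lambda>j B. A j * B) [0..<Suc k] (1\<^sub>m n)
       = A k * foldr (\<lambda>j B. A j * B) [0..<k] (1\<^sub>m n)"
  using foldr_mult_mat_commute[OF car comm, where k = k and xs = "[0..<k]"]
    right_mult_one_mat[OF car[of k]]
  by simp

definition mutation_step_mat :: "nat \<Rightarrow> (nat \<Rightarrow> nat list pmf) \<Rightarrow> real \<Rightarrow> real mat" where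
  "mutation_step_mat d P l = (1 / l) \<cdot>\<^sub>m (subst_matrix d P + (l - 1) \<cdot>\<^sub>m 1\<^sub>m d)"

lemma mutation_step_mat_carrier: "mutation_step_mat d P l \<in> carrier_mat d d"
  by (simp add: mutation_step_mat_def subst_matrix_def)

lemma mutation_step_mat_commute:
  "mutation_step_mat d P l * mutation_step_mat d P l' = mutation_step_mat d P l' * mutation_step_mat d P l"
  unfolding mutation_step_mat_def by (rule affine_mat_commute) (simp add: subst_matrix_def)

lemma index_mutation_step_mat_mult_vec:
  assumes x: "x \<in> carrier_vec d" and a: "a < d"
  shows "(mutation_step_mat d P l *\<^sub>v x) $ a
       = (1 / l) * ((\<Sum>j<d. subst_matrix d P $$ (a, j) * x $ j) + (l - 1) * x $ a)"
proof -
  have "(mutation_step_mat d P l *\<^sub>v x) $ a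
      = (1 / l) * (\<Sum>j<d. subst_matrix d P $$ (a, j) * x $ j + (l - 1) * (of_bool (j = a) * x $ j))"
    using x a by (auto simp: mutation_step_mat_def subst_matrix_def scalar_prod_def lessThan_atLeast0
        sum_distrib_left algebra_simps intro!: sum.cong)
  moreover have "(\<Sum>j<d. (l - 1) * (of_bool (j = a) * x $ j)) = (l - 1) * x $ a"
    using a by (simp add: sum_distrib_left[symmetric])
  ultimately show ?thesis by (simp add: sum.distrib)
qed

lemma expected_ct1_bind_mutate:
  assumes law: "mutation_law d P"
    and fin: "finite (set_pmf p)" and words: "set_pmf p \<subseteq> words d"
    and len: "\<And>v. v \<in> set_pmf p \<Longrightarrow> real (length v) = l"
  shows "expected_vec d (p \<bind> mutate P) (ct1 d)
       = mutation_step_mat d P l *\<^sub>v expected_vec d p (ct1 d)"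
proof (rule eq_vecI)
  fix a assume "a < dim_vec (mutation_step_mat d P l *\<^sub>v expected_vec d p (ct1 d))"
  then have a: "a < d" using mutation_step_mat_carrier[of d P l] by simp
  define M where "M = subst_matrix d P"
  have "expected_vec d (p \<bind> mutate P) (ct1 d) $ a
      = measure_pmf.expectation (p \<bind> mutate P) (\<lambda>x. real (count_list x a))"
    using a by (simp add: expected_vec_def ct1_def ct_singleton)
  also have "\<dots> = measure_pmf.expectation p
      (\<lambda>v. measure_pmf.expectation (mutate P v) (\<lambda>x. real (count_list x a)))"
    using fin words finite_set_pmf_mutate[OF law]
    by (subst pmf_expectation_bind[of "set_pmf p"]) (auto simp: integral_measure_pmf[of "set_pmf p"])
  also have "\<dots> = measure_pmf.expectation p
      (\<lambda>v. (1 / l) * ((\<Sum>j<d. M $$ (a, j) * real (count_list v j)) + (l - 1) * real (count_list v a)))"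
    using a words len expectation_count_list_mutate[OF law]
    by (intro integral_cong_AE) (auto intro!: AE_pmfI simp: M_def subst_matrix_def ct_singleton)
  also have "\<dots> = (1 / l) * ((\<Sum>j<d. M $$ (a, j) * measure_pmf.expectation p (\<lambda>v. real (count_list v j)))
      + (l - 1) * measure_pmf.expectation p (\<lambda>v. real (count_list v a)))"
    using fin by (simp add: integrable_measure_pmf_finite Bochner_Integration.integral_add
        Bochner_Integration.integral_sum)
  also have "\<dots> = (mutation_step_mat d P l *\<^sub>v expected_vec d p (ct1 d)) $ a"
    using a by (simp add: index_mutation_step_mat_mult_vec expected_vec_def ct1_def ct_singleton M_def)
  finally show "expected_vec d (p \<bind> mutate P) (ct1 d) $ a
      = (mutation_step_mat d P l *\<^sub>v expected_vec d p (ct1 d)) $ a" .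
qed (simp add: expected_vec_def mutation_step_mat_def subst_matrix_def)

lemma expected_fr1_eq_scaled_ct1:
  assumes "\<And>v. v \<in> set_pmf p \<Longrightarrow> real (length v) = l"
  shows "expected_vec d p (fr1 d) = (1 / l) \<cdot>\<^sub>v expected_vec d p (ct1 d)"
proof (rule eq_vecI)
  fix a assume "a < dim_vec ((1 / l) \<cdot>\<^sub>v expected_vec d p (ct1 d))"
  then have a: "a < d" by (simp add: expected_vec_def)
  have "measure_pmf.expectation p (\<lambda>v. real (ct v [a]) / real (length v))
      = measure_pmf.expectation p (\<lambda>v. (1 / l) * real (ct v [a]))"
    using assms by (intro integral_cong_AE) (auto intro!: AE_pmfI)
  then show "expected_vec d p (fr1 d) $ a = ((1 / l) \<cdot>\<^sub>v expected_vec d p (ct1 d)) $ a"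
    using a by (simp add: expected_vec_def fr1_def ct1_def)
qed (simp add: expected_vec_def)

lemma expected_ct1_mutation_system:
  assumes law: "tau_mutation_law d \<tau> P" and w: "w \<in> words d"
  defines "L \<equiv> \<lambda>j::nat. real (length w) + real j * (real \<tau> - 1)"
  shows "expected_vec d (mutation_system P w n) (ct1 d)
       = foldr (\<lambda>j A. mutation_step_mat d P (L j) * A) [0..<n] (1\<^sub>m d) *\<^sub>v ct1 d w"
proof (induction n)
  case 0
  have "expected_vec d (return_pmf w) (ct1 d) = ct1 d w"
    by (intro eq_vecI) (simp_all add: expected_vec_def ct1_def)
  moreover have "ct1 d w \<in> carrier_vec d" by (simp add: ct1_def)
  ultimately show ?case by simp
next
  case (Suc n)
  let ?A = "\<lambda>j. mutation_step_mat d P (L j)"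
  have "expected_vec d (mutation_system P w (Suc n)) (ct1 d)
      = ?A n *\<^sub>v expected_vec d (mutation_system P w n) (ct1 d)"
    using law mutation_system_support[OF law w, of n]
    by (auto simp: L_def tau_mutation_law_def intro!: expected_ct1_bind_mutate)
  also have "\<dots> = (?A n * foldr (\<lambda>j A. ?A j * A) [0..<n] (1\<^sub>m d)) *\<^sub>v ct1 d w"
    unfolding Suc
    by (intro assoc_mult_mat_vec[symmetric, of _ d d _ d] mutation_step_mat_carrier
        foldr_mult_mat_carrier) (simp add: ct1_def)
  also have "?A n * foldr (\<lambda>j A. ?A j * A) [0..<n] (1\<^sub>m d)
      = foldr (\<lambda>j A. ?A j * A) [0..<Suc n] (1\<^sub>m d)"
    by (rule foldr_upt_Suc_mult_mat[symmetric])
      (simp_all add: mutation_step_mat_carrier mutation_step_mat_commute)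
  finally show ?case .
qed

theorem mainTheorem4:
  fixes d \<tau> n :: nat and P :: "nat \<Rightarrow> nat list pmf" and w :: "nat list"
  assumes "tau_mutation_law d \<tau> P"
    and "w \<in> words d"
  defines "m \<equiv> length w"
  defines "L \<equiv> \<lambda>j::nat. real m + real j * (real \<tau> - 1)"
  shows "expected_vec d (mutation_system P w n) (fr1 d)
           = (1 / L n) \<cdot>\<^sub>v expected_vec d (mutation_system P w n) (ct1 d)
       \<and> expected_vec d (mutation_system P w n) (fr1 d)
           = (1 / L n) \<cdot>\<^sub>v
             ((foldr (\<lambda>j A. ((1 / L j) \<cdot>\<^sub>m (subst_matrix d P + (L j - 1) \<cdot>\<^sub>m 1\<^sub>m d)) * A)
                 [0..<n] (1\<^sub>m d)) *\<^sub>v ct1 d w)"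
proof -
  have fr: "expected_vec d (mutation_system P w n) (fr1 d)
      = (1 / L n) \<cdot>\<^sub>v expected_vec d (mutation_system P w n) (ct1 d)"
    using mutation_system_support[OF assms(1,2)]
    by (intro expected_fr1_eq_scaled_ct1) (simp add: L_def m_def)
  with expected_ct1_mutation_system[OF assms(1,2)] show ?thesis
    unfolding L_def m_def mutation_step_mat_def by simp
qed

end
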